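(* Let $n\ge1$ and let $\mathcal{C}^n\subset M_{\mathbb{R}}/2\pi M$ be the coamoeba of the pair of pants $\mathcal{P}^n$. Then $\mathcal{C}^n$ is the complement of the image, under the quotient map $M_{\mathbb{R}}\to M_{\mathbb{R}}/2\pi M$, of the interior of $\pi Z_n$.
   Context: Let $\widetilde{M}=\mathbb{Z}\langle e_1,\dots,e_{n+2}\rangle$, $e_{[n+2]}=e_1+\dots+e_{n+2}$, $M=\widetilde{M}/\langle e_{[n+2]}\rangle$, $M_{\mathbb{R}}=M\otimes\mathbb{R}$. Identify $M_{\mathbb{C}^*}=M\otimes\mathbb{C}^*$ with $\mathbb{CP}^{n+1}\setminus\bigcup_j\{z_j=0\}$, and let $\mathrm{Arg}\colon M_{\mathbb{C}^*}\to M_{\mathbb{R}}/2\pi M$ be induced by $(z_1,\dots,z_{n+2})\mapsto(\arg z_1,\dots,\arg z_{n+2})$. The pair of pants is $\mathcal{P}^n=\{\sum_j z_j=0\}\subset M_{\mathbb{C}^*}$, and its coamoeba $\mathcal{C}^n$ is the closure of $\mathrm{Arg}(\mathcal{P}^n)$. The zonotope is $Z_n=\{\sum_j\theta_je_j:\theta_j\in[0,1]\}\subset M_{\mathbb{R}}$; interior is taken in $M_{\mathbb{R}}$. *)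

theory Defs
  imports "HOL-Analysis.Analysis"
begin

text \<open>Index type 'n has n+2 elements; a vector theta in real^'n represents
  the point of M_R (mod the line spanned by e_[n+2]) and of the torus
  M_R / 2 pi M.  Subsets of the quotients are represented by their
  (saturated) preimages in real^'n.\<close>

text \<open>theta and theta' represent the same point of M_R / 2 pi M, i.e. they differ by
  an element of R e_[n+2] + 2 pi Z^(n+2).\<close>
definition torus_equiv :: "real^'n \<Rightarrow> real^'n \<Rightarrow> bool" where
  "torus_equiv \<theta> \<theta>' \<longleftrightarrow>
     (\<exists>t::real. \<exists>k::int^'n. \<forall>j. \<theta>' $ j = \<theta> $ j + t + 2 * pi * of_int (k $ j))"

text \<open>Preimage in real^'n of Arg(P^n): arguments of points (z_1,...,z_(n+2)) with
  all z_j nonzero and sum z_j = 0.\<close>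
definition coamoeba_arg_image :: "(real^'n) set" where
  "coamoeba_arg_image =
     {\<theta>. \<exists>z::complex^'n. (\<forall>j. z $ j \<noteq> 0) \<and> (\<Sum>j\<in>UNIV. z $ j) = 0 \<and>
          torus_equiv (\<chi> j. Arg (z $ j)) \<theta>}"

text \<open>Preimage of the coamoeba C^n (closure of Arg(P^n) in the torus).  Since the
  quotient map real^'n -> torus is open, this is the closure of the preimage.\<close>
definition coamoeba :: "(real^'n) set" where
  "coamoeba = closure coamoeba_arg_image"

text \<open>Preimage in real^'n of pi Z_n subset M_R.\<close>
definition pi_zonotope :: "(real^'n) set" where
  "pi_zonotope = {(\<chi> j. pi * s $ j + c) | (s::real^'n) c::real. \<forall>j. 0 \<le> s $ j \<and> s $ j \<le> 1}"

text \<open>Preimage in real^'n of the image in the torus of the interior (in M_R) of pi Z_n.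
  (For the open quotient map real^'n -> M_R, the preimage of the interior is the
  interior of the preimage.)\<close>
definition torus_image_interior_pi_zonotope :: "(real^'n) set" where
  "torus_image_interior_pi_zonotope =
     {\<theta>. \<exists>x \<in> interior pi_zonotope. torus_equiv x \<theta>}"

end

theory Submission
  imports Defs
begin

text \<open>A point \<open>\<theta>\<close> lies in \<open>Arg(P\<^sup>n)\<close> iff some positive combination of the unit vectors
  \<open>cis \<theta>\<^sub>j\<close> vanishes.  The image of the open zonotope \<open>\<pi>Z\<^sub>n\<close> consists of the \<open>\<theta>\<close> whose
  arguments fit into a half-open arc \<open>[m, m + \<pi>)\<close>; such vectors lie in a closed half-plane
  whose boundary they meet only along the ray through \<open>cis m\<close>, so no positive combination of
  them vanishes.  That image is open, hence it also misses the closure \<open>C\<^sup>n\<close>.  Conversely, if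
  the arguments fit into no such arc, then either three of the vectors lie in no closed
  half-plane, which gives a vanishing positive combination of those three that extends to all
  vectors, or two of them are antipodal; then slightly rotating one of them and a third vector
  (here \<open>n + 2 \<ge> 3\<close> is needed) produces nearby points of the first kind.\<close>

lemma cis_eq_cis_iff: "cis x = cis y \<longleftrightarrow> (\<exists>k::int. x = y + 2 * pi * of_int k)"
  using sin_cos_eq_iff[of x y] by (auto simp: complex_eq_iff)

lemma cis_eq_mult_cis_neg_Arg: "cis x = cis y * cis (- Arg (cis (y - x)))"
proof -
  have "cis (- Arg (cis (y - x))) = inverse (sgn (cis (y - x)))"
    by (simp add: cis_Arg flip: cis_inverse)
  also have "\<dots> = cis (x - y)"
    by (simp add: sgn_div_norm cis_inverse)
  finally show ?thesis by (simp add: cis_mult)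
qed

text \<open>Cramer's rule in \<open>\<real>\<^sup>2\<close>: \<open>Im (cnj p * q)\<close> is the determinant of \<open>p\<close> and \<open>q\<close>.\<close>

lemma real_combination_of_independent:
  fixes p q w :: complex
  assumes "Im (cnj p * q) \<noteq> 0"
  obtains x y :: real where "of_real x * p + of_real y * q = w"
proof
  define d where "d = Im (cnj p * q)"
  let ?x = "Im (cnj w * q)" and ?y = "Im (cnj p * w)"
  have "d \<noteq> 0" using assms by (simp add: d_def)
  then have "of_real d * (of_real (?x / d) * p + of_real (?y / d) * q) = of_real ?x * p + of_real ?y * q"
    by (simp add: distrib_left mult.assoc[symmetric] flip: of_real_mult)
  also have "\<dots> = of_real d * w"
    by (simp add: d_def complex_eq_iff algebra_simps)
  finally show "of_real (?x / d) * p + of_real (?y / d) * q = w"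
    using \<open>d \<noteq> 0\<close> by (metis mult_cancel_left of_real_eq_0_iff)
qed

lemma finite_index_min:
  fixes f :: "'n::finite \<Rightarrow> 'a::linorder"
  obtains m where "\<And>j. f m \<le> f j"
  using ex_is_arg_min_if_finite[of UNIV f] by (auto simp: is_arg_min_linorder)

lemma torus_equiv_iff_cis:
  fixes x \<theta> :: "real^'n"
  shows "torus_equiv x \<theta> \<longleftrightarrow> (\<exists>t. \<forall>j. cis (\<theta>$j) = cis t * cis (x$j))"
proof
  assume "torus_equiv x \<theta>"
  then obtain t k where "\<forall>j. \<theta>$j = x$j + t + 2 * pi * of_int (k$j)"
    unfolding torus_equiv_def by blast
  then have "cis (\<theta>$j) = cis t * cis (x$j)" for j
    by (metis cis_eq_cis_iff cis_mult add.commute)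
  then show "\<exists>t. \<forall>j. cis (\<theta>$j) = cis t * cis (x$j)" by blast
next
  assume "\<exists>t. \<forall>j. cis (\<theta>$j) = cis t * cis (x$j)"
  then obtain t where "\<forall>j. cis (\<theta>$j) = cis (x$j + t)"
    by (auto simp: cis_mult add.commute)
  then have "\<forall>j. \<exists>k::int. \<theta>$j = x$j + t + 2 * pi * of_int k"
    by (simp add: cis_eq_cis_iff)
  then obtain k where "\<forall>j. \<theta>$j = x$j + t + 2 * pi * of_int (k j)"
    by metis
  then show "torus_equiv x \<theta>"
    unfolding torus_equiv_def by (intro exI[of _ t] exI[of _ "\<chi> j. k j"]) simp
qed

lemma coamoeba_arg_image_iff:
  fixes \<theta> :: "real^'n"
  shows "\<theta> \<in> coamoeba_arg_image \<longleftrightarrow>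
     (\<exists>r. (\<forall>j. r j > 0) \<and> (\<Sum>j\<in>UNIV. of_real (r j) * cis (\<theta>$j)) = 0)"
proof
  assume "\<theta> \<in> coamoeba_arg_image"
  then obtain z :: "complex^'n" where z: "\<forall>j. z$j \<noteq> 0" "(\<Sum>j\<in>UNIV. z$j) = 0"
    and "torus_equiv (\<chi> j. Arg (z$j)) \<theta>"
    unfolding coamoeba_arg_image_def by blast
  then obtain t where t: "\<forall>j. cis (\<theta>$j) = cis t * sgn (z$j)"
    unfolding torus_equiv_iff_cis by (auto simp: cis_Arg)
  have "of_real (norm (z$j)) * cis (\<theta>$j) = cis t * z$j" for j
    using t by (simp add: complex_sgn_def scaleR_conv_of_real field_simps norm_eq_zero)
  then have "(\<Sum>j\<in>UNIV. of_real (norm (z$j)) * cis (\<theta>$j)) = cis t * (\<Sum>j\<in>UNIV. z$j)"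
    by (simp add: sum_distrib_left)
  then show "\<exists>r. (\<forall>j. r j > 0) \<and> (\<Sum>j\<in>UNIV. of_real (r j) * cis (\<theta>$j)) = 0"
    using z by (intro exI[of _ "\<lambda>j. norm (z$j)"]) auto
next
  assume "\<exists>r. (\<forall>j. r j > 0) \<and> (\<Sum>j\<in>UNIV. of_real (r j) * cis (\<theta>$j)) = 0"
  then obtain r where r: "\<forall>j. r j > 0" "(\<Sum>j\<in>UNIV. of_real (r j) * cis (\<theta>$j)) = 0"
    by blast
  define z where "z = (\<chi> j. of_real (r j) * cis (\<theta>$j))"
  have z0: "\<forall>j. z$j \<noteq> 0" using r by (simp add: z_def) (metis less_irrefl)
  have "cis (Arg (z$j)) = cis (\<theta>$j)" for j
    using r z0 by (simp add: cis_Arg z_def sgn_mult)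
  then have "torus_equiv (\<chi> j. Arg (z$j)) \<theta>"
    unfolding torus_equiv_iff_cis by (intro exI[of _ 0]) simp
  moreover have "(\<Sum>j\<in>UNIV. z$j) = 0" using r by (simp add: z_def)
  ultimately show "\<theta> \<in> coamoeba_arg_image"
    unfolding coamoeba_arg_image_def using z0 by blast
qed

lemma interior_pi_zonotope:
  "interior pi_zonotope = {x :: real^'n. \<forall>i j. x$i - x$j < pi}" (is "_ = ?S")
proof
  show "?S \<subseteq> interior pi_zonotope"
  proof (rule interior_maximal)
    show "open ?S"
      unfolding Collect_all_eq by (intro open_INT ballI open_Collect_less continuous_intros) simp_all
    show "?S \<subseteq> pi_zonotope"
    proof
      fix x assume x: "x \<in> ?S"
      obtain m where m: "\<And>j. x$m \<le> x$j" using finite_index_min by blast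
      define s where "s = (\<chi> j. (x$j - x$m) / pi)"
      have "0 \<le> s$j \<and> s$j \<le> 1" for j
        using x m[of j] by (simp add: s_def field_simps less_imp_le)
      moreover have "x = (\<chi> j. pi * s$j + x$m)"
        by (simp add: s_def vec_eq_iff)
      ultimately show "x \<in> pi_zonotope"
        unfolding pi_zonotope_def by blast
    qed
  qed
next
  show "interior pi_zonotope \<subseteq> ?S"
  proof (clarify, rule ccontr)
    fix x :: "real^'n" and i j
    assume x: "x \<in> interior pi_zonotope" and "\<not> x$i - x$j < pi"
    then have ij: "pi \<le> x$i - x$j" "i \<noteq> j" by auto
    obtain e where e: "e > 0" "ball x e \<subseteq> pi_zonotope"
      using x mem_interior by blast
    define y where "y = x + (e/2) *\<^sub>R axis i 1"
    have "y \<in> pi_zonotope" using e by (simp add: y_def subset_iff dist_norm)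
    then obtain s c where y: "y = (\<chi> j. pi * s$j + (c::real))" and s: "\<forall>j. 0 \<le> s$j \<and> s$j \<le> 1"
      unfolding pi_zonotope_def by blast
    have "x$i - x$j + e/2 = y$i - y$j" using ij by (simp add: y_def axis_def)
    also have "\<dots> = pi * (s$i - s$j)" using y by (simp add: algebra_simps)
    also have "\<dots> \<le> pi" using s[rule_format, of i] s[rule_format, of j] by simp
    finally show False using ij e by simp
  qed
qed

lemma torus_image_interior_pi_zonotope_iff:
  fixes \<theta> :: "real^'n"
  shows "\<theta> \<in> torus_image_interior_pi_zonotope \<longleftrightarrow>
     (\<exists>x. (\<forall>i j. x$i - x$j < pi) \<and> (\<forall>j. cis (\<theta>$j) = cis (x$j)))"
proof
  assume "\<theta> \<in> torus_image_interior_pi_zonotope"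
  then obtain x t where x: "\<forall>i j. x$i - x$j < pi" and t: "\<forall>j. cis (\<theta>$j) = cis t * cis (x$j)"
    unfolding torus_image_interior_pi_zonotope_def interior_pi_zonotope torus_equiv_iff_cis by blast
  have "cis (\<theta>$j) = cis ((\<chi> j. x$j + t)$j)" for j
    using t by (simp add: cis_mult add.commute)
  moreover have "(\<chi> j. x$j + t)$i - (\<chi> j. x$j + t)$j < pi" for i j
    using x by simp
  ultimately show "\<exists>x. (\<forall>i j. x$i - x$j < pi) \<and> (\<forall>j. cis (\<theta>$j) = cis (x$j))"
    by blast
next
  assume "\<exists>x. (\<forall>i j. x$i - x$j < pi) \<and> (\<forall>j. cis (\<theta>$j) = cis (x$j))"
  then obtain x where x: "\<forall>i j. x$i - x$j < pi" "\<forall>j. cis (\<theta>$j) = cis (x$j)"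
    by blast
  then have "torus_equiv x \<theta>"
    unfolding torus_equiv_iff_cis by (intro exI[of _ 0]) simp
  then show "\<theta> \<in> torus_image_interior_pi_zonotope"
    unfolding torus_image_interior_pi_zonotope_def interior_pi_zonotope using x(1) by blast
qed

lemma open_torus_image_interior_pi_zonotope:
  "open (torus_image_interior_pi_zonotope :: (real^'n) set)"
proof -
  define L where "L = {y :: real^'n. \<exists>t k. \<forall>j. y$j = t + 2 * pi * of_int (k$j)}"
  have "\<theta> \<in> torus_image_interior_pi_zonotope \<longleftrightarrow> (\<exists>x\<in>interior pi_zonotope. \<theta> - x \<in> L)" for \<theta>
    unfolding torus_image_interior_pi_zonotope_def torus_equiv_def L_def
    by (simp add: algebra_simps)
  then have "torus_image_interior_pi_zonotope = (\<Union>x\<in>interior pi_zonotope. \<Union>y\<in>L. {x + y})"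
    by (auto; metis add.commute add_diff_cancel_left' diff_add_cancel)
  then show ?thesis
    using open_sums[of "interior pi_zonotope" L] by simp
qed

lemma sum_of_real_mult_cis_neq_zero:
  assumes "finite S" "S \<noteq> {}"
    and r: "\<And>j. j \<in> S \<Longrightarrow> r j > 0"
    and \<phi>: "\<And>j. j \<in> S \<Longrightarrow> 0 \<le> \<phi> j \<and> \<phi> j < pi"
  shows "(\<Sum>j\<in>S. of_real (r j) * cis (\<phi> j)) \<noteq> 0"
proof
  assume sum0: "(\<Sum>j\<in>S. of_real (r j) * cis (\<phi> j)) = 0"
  have "(\<Sum>j\<in>S. r j * sin (\<phi> j)) = Im (\<Sum>j\<in>S. of_real (r j) * cis (\<phi> j))"
    by (simp add: Im_sum)
  also have "\<dots> = 0"
    by (simp only: sum0 zero_complex.sel)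
  finally have Im0: "(\<Sum>j\<in>S. r j * sin (\<phi> j)) = 0" .
  have nonneg: "0 \<le> r j * sin (\<phi> j)" if "j \<in> S" for j
    using r[OF that] \<phi>[OF that] sin_ge_zero[of "\<phi> j"] by simp
  have "\<forall>j\<in>S. r j * sin (\<phi> j) = 0"
    using sum_nonneg_eq_0_iff[OF \<open>finite S\<close> nonneg] Im0 by simp
  have "\<phi> j = 0" if "j \<in> S" for j
  proof (rule ccontr)
    assume "\<phi> j \<noteq> 0"
    then have "0 < r j * sin (\<phi> j)"
      using r[OF that] \<phi>[OF that] sin_gt_zero[of "\<phi> j"] by simp
    then show False
      using \<open>\<forall>j\<in>S. r j * sin (\<phi> j) = 0\<close> that by simp
  qed
  then have "(\<Sum>j\<in>S. r j) = Re (\<Sum>j\<in>S. of_real (r j) * cis (\<phi> j))"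
    by simp
  also have "\<dots> = 0"
    by (simp only: sum0 zero_complex.sel)
  finally show False
    using sum_pos[of S r] assms by simp
qed

lemma coamoeba_arg_image_Int_torus_image_empty:
  "coamoeba_arg_image \<inter> torus_image_interior_pi_zonotope = ({} :: (real^'n) set)"
proof (intro equals0I, elim IntE)
  fix \<theta> :: "real^'n"
  assume "\<theta> \<in> coamoeba_arg_image" "\<theta> \<in> torus_image_interior_pi_zonotope"
  then obtain r x where r: "\<forall>j. r j > 0" "(\<Sum>j\<in>UNIV. of_real (r j) * cis (\<theta>$j)) = 0"
    and x: "\<forall>i j. x$i - x$j < pi" "\<forall>j. cis (\<theta>$j) = cis (x$j)"
    unfolding coamoeba_arg_image_iff torus_image_interior_pi_zonotope_iff by blast
  obtain m where m: "\<And>j. x$m \<le> x$j" using finite_index_min by blast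
  have "(\<Sum>j\<in>UNIV. of_real (r j) * cis (x$j - x$m)) = cis (- x$m) * (\<Sum>j\<in>UNIV. of_real (r j) * cis (\<theta>$j))"
    using x(2) by (simp add: sum_distrib_left cis_mult mult.left_commute)
  also have "\<dots> = 0" using r(2) by simp
  moreover have "(\<Sum>j\<in>UNIV. of_real (r j) * cis (x$j - x$m)) \<noteq> 0"
    by (rule sum_of_real_mult_cis_neq_zero) (use r(1) x(1) m in auto)
  ultimately show False by simp
qed

lemma positive_relation_extends:
  fixes u :: "'n::finite \<Rightarrow> complex"
  assumes pos: "\<alpha> > 0" "\<beta> > 0" "\<gamma> > 0"
    and rel: "of_real \<alpha> * u a + of_real \<beta> * u b + of_real \<gamma> * u c = 0"
    and indep: "Im (cnj (u a) * u b) \<noteq> 0"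
  shows "\<exists>r. (\<forall>j. r j > 0) \<and> (\<Sum>j\<in>UNIV. of_real (r j) * u j) = 0"
proof -
  \<comment> \<open>start from the coefficients \<open>1\<close>, cancel their sum with \<open>u a\<close> and \<open>u b\<close>, and add a
    large multiple \<open>K\<close> of the given relation to make all coefficients positive\<close>
  obtain x y where xy: "of_real x * u a + of_real y * u b = - (\<Sum>j\<in>UNIV. u j)"
    using real_combination_of_independent[OF indep] .
  define K where "K = \<bar>x\<bar> / \<alpha> + \<bar>y\<bar> / \<beta>"
  have "\<bar>x\<bar> \<le> K * \<alpha>" "\<bar>y\<bar> \<le> K * \<beta>" "0 \<le> K"
    using pos by (auto simp: K_def field_simps)
  then have Ka: "0 \<le> K * \<alpha> + x" and Kb: "0 \<le> K * \<beta> + y" and Kc: "0 \<le> K * \<gamma>"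
    using pos by auto
  define r where "r j = 1 + (if j = a then K * \<alpha> + x else 0) + (if j = b then K * \<beta> + y else 0)
                        + (if j = c then K * \<gamma> else 0)" for j
  have delta: "(\<Sum>j\<in>UNIV. of_real (if j = i then v else 0) * u j) = of_real v * u i" for i v
  proof -
    have "(\<Sum>j\<in>UNIV. of_real (if j = i then v else 0) * u j) = (\<Sum>j\<in>UNIV. if j = i then of_real v * u j else 0)"
      by (rule sum.cong) auto
    also have "\<dots> = of_real v * u i"
      by simp
    finally show ?thesis .
  qed
  have "(\<Sum>j\<in>UNIV. of_real (r j) * u j) = (\<Sum>j\<in>UNIV. u j) + of_real (K * \<alpha> + x) * u a
          + of_real (K * \<beta> + y) * u b + of_real (K * \<gamma>) * u c"
    unfolding r_def of_real_add distrib_right sum.distrib delta by simp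
  also have "\<dots> = ((\<Sum>j\<in>UNIV. u j) + (of_real x * u a + of_real y * u b))
          + of_real K * (of_real \<alpha> * u a + of_real \<beta> * u b + of_real \<gamma> * u c)"
    by (simp add: algebra_simps)
  also have "\<dots> = 0"
    by (simp only: xy rel) simp
  finally have "(\<Sum>j\<in>UNIV. of_real (r j) * u j) = 0" .
  moreover have "\<forall>j. r j > 0"
    unfolding r_def using Ka Kb Kc by (intro allI add_pos_nonneg) auto
  ultimately show ?thesis
    by (intro exI[of _ r] conjI)
qed

lemma mem_coamoeba_arg_image_three_angles:
  fixes \<theta> :: "real^'n"
  assumes "cis (\<theta>$b) = cis (\<theta>$a) * cis M" "cis (\<theta>$c) = cis (\<theta>$a) * cis m"
    and "0 < M" "M < pi" "- pi < m" "m < 0" "pi < M - m"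
  shows "\<theta> \<in> coamoeba_arg_image"
proof -
  let ?u = "\<lambda>j. cis (\<theta>$j)"
  have "sin (M - m) < 0" using assms by (intro sin_lt_zero) auto
  moreover have "sin (- m) > 0" using assms by (intro sin_gt_zero) auto
  moreover have "sin M > 0" using assms by (intro sin_gt_zero) auto
  ultimately have pos: "- sin (M - m) > 0" "- sin m > 0" "sin M > 0"
    by auto
  have "of_real (- sin (M - m)) * ?u a + of_real (- sin m) * ?u b + of_real (sin M) * ?u c
      = ?u a * (of_real (- sin (M - m)) + of_real (- sin m) * cis M + of_real (sin M) * cis m)"
    using assms(1,2) by (simp add: algebra_simps)
  also have "\<dots> = 0"
    by (simp add: complex_eq_iff sin_diff algebra_simps)
  finally have "of_real (- sin (M - m)) * ?u a + of_real (- sin m) * ?u b + of_real (sin M) * ?u c = 0" .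
  moreover have "Im (cnj (?u a) * ?u b) \<noteq> 0"
    using assms(1) pos(3) by (simp add: cis_cnj cis_mult)
  ultimately show ?thesis
    unfolding coamoeba_arg_image_iff by (rule positive_relation_extends[OF pos])
qed

lemma antipodal_third_mem_closure_coamoeba_arg_image:
  fixes \<theta> :: "real^'n"
  assumes "c \<noteq> p" "c \<noteq> q"
    and anti: "cis (\<theta>$p) = - cis (\<theta>$q)"
    and third: "cis (\<theta>$c) = cis (\<theta>$q) * cis \<psi>" "- pi \<le> \<psi>" "\<psi> < 0"
  shows "\<theta> \<in> closure coamoeba_arg_image"
  unfolding closure_approachable
proof (intro allI impI)
  fix e :: real assume "e > 0"
  have "p \<noteq> q"
  proof
    assume "p = q"
    then have "cis (\<theta>$q) = 0" using anti by simp
    then show False by simp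
  qed
  \<comment> \<open>turning \<open>\<theta>$p\<close> back by \<open>\<eta>\<close> and \<open>\<theta>$c\<close> forward by \<open>\<eta>\<close> puts the three vectors into
    general position, at angles \<open>0\<close>, \<open>\<pi> - \<eta>\<close> and \<open>\<psi> + \<eta>\<close> from \<open>\<theta>$q\<close>\<close>
  define \<eta> where "\<eta> = min (e/3) (- \<psi>/3)"
  have \<eta>: "0 < \<eta>" "\<eta> < e/2" "\<psi> + 2 * \<eta> < 0"
    using \<open>e > 0\<close> third by (auto simp: \<eta>_def min_def)
  define \<theta>' where "\<theta>' = \<theta> + \<eta> *\<^sub>R (axis c 1 - axis p 1)"
  have \<theta>': "\<theta>'$q = \<theta>$q" "\<theta>'$p = \<theta>$p - \<eta>" "\<theta>'$c = \<theta>$c + \<eta>"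
    using assms \<open>p \<noteq> q\<close> by (simp_all add: \<theta>'_def axis_def)
  have "cis (\<theta>'$p) = - cis (\<theta>$q) * cis (- \<eta>)"
    unfolding \<theta>'(2) anti[symmetric] by (simp add: cis_mult)
  also have "\<dots> = cis (\<theta>$q) * (cis pi * cis (- \<eta>))"
    by simp
  also have "\<dots> = cis (\<theta>$q) * cis (pi - \<eta>)"
    by (subst cis_mult) simp
  finally have "cis (\<theta>'$p) = cis (\<theta>'$q) * cis (pi - \<eta>)"
    unfolding \<theta>'(1) .
  moreover have "cis (\<theta>'$c) = cis (\<theta>'$q) * cis (\<psi> + \<eta>)"
    unfolding \<theta>'(1,3) by (simp add: third(1) cis_mult[symmetric] mult.assoc)
  ultimately have "\<theta>' \<in> coamoeba_arg_image"
    by (rule mem_coamoeba_arg_image_three_angles) (use \<eta> third in auto)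
  moreover have "dist \<theta>' \<theta> < e"
  proof -
    have "dist \<theta>' \<theta> = \<eta> * norm (axis c 1 - axis p (1::real))"
      using \<eta> by (simp add: \<theta>'_def dist_norm)
    also have "\<dots> \<le> \<eta> * 2"
      using \<eta> norm_triangle_ineq4[of "axis c (1::real)" "axis p 1"] by (intro mult_left_mono) auto
    finally show ?thesis using \<eta> by linarith
  qed
  ultimately show "\<exists>\<theta>'\<in>coamoeba_arg_image. dist \<theta>' \<theta> < e" by blast
qed

lemma antipodal_mem_closure_coamoeba_arg_image:
  fixes \<theta> :: "real^'n"
  assumes card: "CARD('n) \<ge> 3" and anti: "cis (\<theta>$p) = - cis (\<theta>$q)"
  shows "\<theta> \<in> closure coamoeba_arg_image"
proof -
  obtain c where c: "c \<noteq> p" "c \<noteq> q"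
  proof -
    have "\<not> UNIV \<subseteq> {p, q}"
    proof
      assume "UNIV \<subseteq> {p, q}"
      then have "CARD('n) \<le> card {p, q}" by (intro card_mono) auto
      also have "\<dots> \<le> 2" by (simp add: card_insert_if)
      finally show False using card by simp
    qed
    then show thesis using that by blast
  qed
  define \<psi> where "\<psi> = - Arg (cis (\<theta>$q - \<theta>$c))"
  have \<psi>: "- pi \<le> \<psi>" "\<psi> < pi" "cis (\<theta>$c) = cis (\<theta>$q) * cis \<psi>"
    using Arg_bounded[of "cis (\<theta>$q - \<theta>$c)"] unfolding \<psi>_def
    by (auto simp: cis_eq_mult_cis_neg_Arg[symmetric])
  show ?thesis
  proof (cases "\<psi> < 0")
    case True
    then show ?thesis
      using antipodal_third_mem_closure_coamoeba_arg_image[OF c anti \<psi>(3,1)] by blast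
  next
    case False
    have "cis (\<psi> - pi) = - cis \<psi>"
      by (simp add: complex_eq_iff cos_diff sin_diff)
    then have "cis (\<theta>$c) = cis (\<theta>$p) * cis (\<psi> - pi)"
      using \<psi>(3) anti by simp
    moreover have "cis (\<theta>$q) = - cis (\<theta>$p)"
      using anti by simp
    ultimately show ?thesis
      using antipodal_third_mem_closure_coamoeba_arg_image[OF c(2,1)] False \<psi>(2) by auto
  qed
qed

lemma compl_torus_image_subset_closure_coamoeba_arg_image:
  assumes card: "CARD('n) \<ge> 3"
  shows "- torus_image_interior_pi_zonotope \<subseteq> closure (coamoeba_arg_image :: (real^'n) set)"
proof
  fix \<theta> :: "real^'n" and a :: 'n
  assume \<theta>: "\<theta> \<in> - torus_image_interior_pi_zonotope"
  define \<phi> where "\<phi> j = - Arg (cis (\<theta>$a - \<theta>$j))" for j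
  have \<phi>: "- pi \<le> \<phi> j" "\<phi> j < pi" and cis_\<phi>: "cis (\<theta>$j) = cis (\<theta>$a) * cis (\<phi> j)" for j
    using Arg_bounded[of "cis (\<theta>$a - \<theta>$j)"] unfolding \<phi>_def
    by (auto simp: cis_eq_mult_cis_neg_Arg[symmetric])
  obtain b where b: "\<And>j. \<phi> j \<le> \<phi> b" using finite_index_min[of "\<lambda>j. - \<phi> j"] by auto
  obtain c where c: "\<And>j. \<phi> c \<le> \<phi> j" using finite_index_min by blast
  consider "\<phi> b - \<phi> c < pi" | "\<phi> b - \<phi> c = pi" | "\<phi> c = - pi" | "pi < \<phi> b - \<phi> c" "- pi < \<phi> c"
    using \<phi>(1)[of c] by linarith
  then show "\<theta> \<in> closure coamoeba_arg_image"
  proof cases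
    case 1
    have "\<forall>i j. (\<chi> j. \<theta>$a + \<phi> j)$i - (\<chi> j. \<theta>$a + \<phi> j)$j < pi"
      using b c 1 by (auto intro: le_less_trans[OF diff_mono])
    moreover have "cis (\<theta>$j) = cis ((\<chi> j. \<theta>$a + \<phi> j)$j)" for j
      by (simp add: cis_mult cis_\<phi>[of j])
    ultimately have "\<theta> \<in> torus_image_interior_pi_zonotope"
      unfolding torus_image_interior_pi_zonotope_iff by blast
    with \<theta> show ?thesis by blast
  next
    case 2
    then have "\<phi> b = \<phi> c + pi" by simp
    then have "cis (\<phi> b) = - cis (\<phi> c)"
      by (simp add: complex_eq_iff)
    then have "cis (\<theta>$b) = - cis (\<theta>$c)" by (simp add: cis_\<phi>[of b] cis_\<phi>[of c])
    then show ?thesis by (rule antipodal_mem_closure_coamoeba_arg_image[OF card])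
  next
    case 3
    moreover have "cis (- pi) = - 1" by (simp add: complex_eq_iff)
    ultimately have "cis (\<theta>$c) = - cis (\<theta>$a)" by (simp add: cis_\<phi>[of c])
    then show ?thesis by (rule antipodal_mem_closure_coamoeba_arg_image[OF card])
  next
    case 4
    have "\<theta> \<in> coamoeba_arg_image"
      by (rule mem_coamoeba_arg_image_three_angles[OF cis_\<phi> cis_\<phi>]) (use 4 \<phi>(2)[of b] in auto)
    then show ?thesis using closure_subset by blast
  qed
qed

theorem proposition2p4:
  assumes "CARD('n::finite) \<ge> 3"
  shows "(coamoeba :: (real^'n) set) = - torus_image_interior_pi_zonotope"
proof
  show "(coamoeba :: (real^'n) set) \<subseteq> - torus_image_interior_pi_zonotope"
    unfolding coamoeba_def
    using coamoeba_arg_image_Int_torus_image_empty open_torus_image_interior_pi_zonotope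
    by (intro closure_minimal) (auto simp: closed_Compl)
  show "- torus_image_interior_pi_zonotope \<subseteq> (coamoeba :: (real^'n) set)"
    unfolding coamoeba_def by (rule compl_torus_image_subset_closure_coamoeba_arg_image[OF assms])
qed

end
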